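(* In the Byblos protocol described in the context, at all times, if $P=\mathit{pending}[t]$ is a non-empty pending set calculated by a correct server, then $\bigcup_{t'<t}\mathit{confirmed}[t']\subseteq P$, where $\mathit{confirmed}[t']$ is the confirmed set of any correct server.
   Context: Byblos protocol. There are $n=4f+1$ servers, at most $f$ of which are Byzantine; the rest are correct. Clients are not Byzantine (they may crash). Messages between correct parties are eventually delivered, channels are FIFO, senders are authenticated, and client messages are signed and unforgeable. Each correct server keeps an integer $\mathit{clock}$ (initially $0$), sets $\mathit{proposed}[s]$ of pairs $(T,k)$ for each server $s$, maps $\mathit{confirmed}[t]$ and $\mathit{pending}[t]$ from timestamps to sets of transactions (initially empty), and sets $\mathit{ConfirmWitness}[T]$ of servers. Client with transaction $T$: broadcasts $\mathrm{Propose}(T)$; waits for $\mathrm{ProposeAck}(T,\cdot)$ from at least $n-f$ servers; letting $\mathit{timestamp}[s]$ be the value from server $s$ ($0$ if none), sets $\hat t$ to $1$ plus the $(f+1)$-st largest value; broadcasts $\mathrm{Confirm}(T,\hat t)$. Correct server: on $\mathrm{Propose}(T)$ from a client, adds $(T,\mathit{clock})$ to $\mathit{proposed}[\mathit{self}]$, sends $\mathrm{Proposed}(T,\mathit{clock})$ to all servers and $\mathrm{ProposeAck}(T,\mathit{clock})$ to the client; on $\mathrm{Proposed}(T,k)$ from server $s$, adds $(T,k)$ to $\mathit{proposed}[s]$; on $\mathrm{Confirm}(T,\hat t)$ from a client or server $s$: sets $\mathit{clock}:=\max(\mathit{clock},\hat t)$, adds $T$ to $\mathit{confirmed}[\hat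 t]$, forwards $\mathrm{Confirm}(T,\hat t)$ to all servers if not previously sent, adds $s$ to $\mathit{ConfirmWitness}[T]$, and if $\mathit{pending}[\hat t]=\emptyset$ and $|\mathit{ConfirmWitness}[T]|=n-f$, sets $\mathit{pending}[\hat t]$ to the set of all $T'$ such that $(T',k)\in\mathit{proposed}[s']$ for some $s'\in\mathit{ConfirmWitness}[T]$ and some $k\le\hat t$. *)

theory Defs
  imports Main "HOL-Library.Multiset" "HOL-Library.Cardinality"
begin

datatype ('s, 't) party = Srv 's | Cli 't
  (* servers of type 's; each transaction T is issued by its own client Cli T *)

datatype 't msg =
    Propose 't | ProposeAck 't int | Proposed 't int | Confirm 't int

datatype cphase = Idle | Waiting | Done

record ('s, 't) gstate =
  clock     :: "'s \<Rightarrow> int"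
  proposed  :: "'s \<Rightarrow> 's \<Rightarrow> ('t \<times> int) set"   (* proposed at server p of server s *)
  confirmed :: "'s \<Rightarrow> int \<Rightarrow> 't set"
  pending   :: "'s \<Rightarrow> int \<Rightarrow> 't set"
  cwit      :: "'s \<Rightarrow> 't \<Rightarrow> 's set"
  fwd       :: "'s \<Rightarrow> ('t \<times> int) set"        (* Confirm messages already forwarded *)
  chan      :: "('s, 't) party \<Rightarrow> ('s, 't) party \<Rightarrow> 't msg list"  (* FIFO channel sender -> receiver *)
  phase     :: "'t \<Rightarrow> cphase"
  acks      :: "'t \<Rightarrow> 's \<Rightarrow> int option"       (* timestamps received by client of T *)
  signed    :: "('t \<times> int) set"               (* Confirm(T,t) messages signed by clients *)

definition init_state :: "('s, 't) gstate" where
  "init_state = \<lparr> clock = (\<lambda>_. 0), proposed = (\<lambda>_ _. {}), confirmed = (\<lambda>_ _. {}),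
     pending = (\<lambda>_ _. {}), cwit = (\<lambda>_ _. {}), fwd = (\<lambda>_. {}), chan = (\<lambda>_ _. []),
     phase = (\<lambda>_. Idle), acks = (\<lambda>_ _. None), signed = {} \<rparr>"

definition is_srv :: "('s, 't) party \<Rightarrow> bool" where
  "is_srv p = (\<exists>s. p = Srv s)"

definition send :: "(('s, 't) party \<Rightarrow> ('s, 't) party \<Rightarrow> 't msg list)
   \<Rightarrow> ('s, 't) party \<Rightarrow> ('s, 't) party \<Rightarrow> 't msg \<Rightarrow> (('s, 't) party \<Rightarrow> ('s, 't) party \<Rightarrow> 't msg list)" where
  "send ch p q m = ch(p := (ch p)(q := ch p q @ [m]))"

definition bcast :: "(('s, 't) party \<Rightarrow> ('s, 't) party \<Rightarrow> 't msg list)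
   \<Rightarrow> ('s, 't) party \<Rightarrow> 't msg \<Rightarrow> (('s, 't) party \<Rightarrow> ('s, 't) party \<Rightarrow> 't msg list)" where
  "bcast ch p m = (\<lambda>a b. if a = p \<and> is_srv b then ch a b @ [m] else ch a b)"

definition pop :: "(('s, 't) party \<Rightarrow> ('s, 't) party \<Rightarrow> 't msg list)
   \<Rightarrow> ('s, 't) party \<Rightarrow> ('s, 't) party \<Rightarrow> (('s, 't) party \<Rightarrow> ('s, 't) party \<Rightarrow> 't msg list)" where
  "pop ch p q = ch(p := (ch p)(q := tl (ch p q)))"

(* the (f+1)-st largest value of ts over all servers *)
definition kth_largest :: "nat \<Rightarrow> ('s::finite \<Rightarrow> int) \<Rightarrow> int" where
  "kth_largest f ts = rev (sorted_list_of_multiset (image_mset ts (mset_set UNIV))) ! f"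

definition client_ts :: "nat \<Rightarrow> ('s::finite \<Rightarrow> int option) \<Rightarrow> int" where
  "client_ts f a = 1 + kth_largest f (\<lambda>s. case a s of None \<Rightarrow> 0 | Some k \<Rightarrow> k)"

fun handle :: "nat \<Rightarrow> 's::finite \<Rightarrow> ('s, 't) party \<Rightarrow> 't msg \<Rightarrow> ('s, 't) gstate \<Rightarrow> ('s, 't) gstate" where
  "handle f s (Cli c) (Propose T) \<sigma> =
     \<sigma>\<lparr> proposed := (proposed \<sigma>)(s := (proposed \<sigma> s)(s := insert (T, clock \<sigma> s) (proposed \<sigma> s s))),
        chan := send (bcast (chan \<sigma>) (Srv s) (Proposed T (clock \<sigma> s))) (Srv s) (Cli c)
                     (ProposeAck T (clock \<sigma> s)) \<rparr>"
| "handle f s (Srv q) (Proposed T k) \<sigma> =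
     \<sigma>\<lparr> proposed := (proposed \<sigma>)(s := (proposed \<sigma> s)(q := insert (T, k) (proposed \<sigma> s q))) \<rparr>"
| "handle f s p (Confirm T t) \<sigma> =
     (let W = (case p of Srv q \<Rightarrow> insert q (cwit \<sigma> s T) | Cli _ \<Rightarrow> cwit \<sigma> s T);
          new = ((T, t) \<notin> fwd \<sigma> s)
      in \<sigma>\<lparr> clock := (clock \<sigma>)(s := max (clock \<sigma> s) t),
            confirmed := (confirmed \<sigma>)(s := (confirmed \<sigma> s)(t := insert T (confirmed \<sigma> s t))),
            chan := (if new then bcast (chan \<sigma>) (Srv s) (Confirm T t) else chan \<sigma>),
            fwd := (if new then (fwd \<sigma>)(s := insert (T, t) (fwd \<sigma> s)) else fwd \<sigma>),
            cwit := (cwit \<sigma>)(s := (cwit \<sigma> s)(T := W)),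
            pending := (if pending \<sigma> s t = {} \<and> card W = card (UNIV :: 's set) - f
                        then (pending \<sigma>)(s := (pending \<sigma> s)(t :=
                               {T'. \<exists>q\<in>W. \<exists>k. k \<le> t \<and> (T', k) \<in> proposed \<sigma> s q}))
                        else pending \<sigma>) \<rparr>)"
| "handle f s p m \<sigma> = \<sigma>"

fun cli_handle :: "'t \<Rightarrow> 's \<Rightarrow> 't msg \<Rightarrow> ('s, 't) gstate \<Rightarrow> ('s, 't) gstate" where
  "cli_handle c s (ProposeAck T k) \<sigma> =
     (if T = c \<and> phase \<sigma> c = Waiting \<and> acks \<sigma> c s = None
      then \<sigma>\<lparr> acks := (acks \<sigma>)(c := (acks \<sigma> c)(s := Some k)) \<rparr> else \<sigma>)"
| "cli_handle c s m \<sigma> = \<sigma>"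

(* reachable global states, with Byzantine server set B; n = CARD('s) *)
inductive reach :: "nat \<Rightarrow> 's::finite set \<Rightarrow> ('s, 't) gstate \<Rightarrow> bool" for f B where
  init: "reach f B init_state"
| cli_propose: "reach f B \<sigma> \<Longrightarrow> phase \<sigma> c = Idle \<Longrightarrow>
     reach f B (\<sigma>\<lparr> phase := (phase \<sigma>)(c := Waiting), chan := bcast (chan \<sigma>) (Cli c) (Propose c) \<rparr>)"
| cli_recv: "reach f B \<sigma> \<Longrightarrow> chan \<sigma> (Srv s) (Cli c) = m # ms \<Longrightarrow>
     reach f B (cli_handle c s m (\<sigma>\<lparr> chan := pop (chan \<sigma>) (Srv s) (Cli c) \<rparr>))"
| cli_confirm: "reach f B \<sigma> \<Longrightarrow> phase \<sigma> c = Waiting \<Longrightarrow>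
     card {s. acks \<sigma> c s \<noteq> None} \<ge> card (UNIV :: 's set) - f \<Longrightarrow>
     reach f B (\<sigma>\<lparr> phase := (phase \<sigma>)(c := Done),
                    signed := insert (c, client_ts f (acks \<sigma> c)) (signed \<sigma>),
                    chan := bcast (chan \<sigma>) (Cli c) (Confirm c (client_ts f (acks \<sigma> c))) \<rparr>)"
| srv_recv: "reach f B \<sigma> \<Longrightarrow> s \<notin> B \<Longrightarrow> chan \<sigma> p (Srv s) = m # ms \<Longrightarrow>
     reach f B (handle f s p m (\<sigma>\<lparr> chan := pop (chan \<sigma>) p (Srv s) \<rparr>))"
| byz_send: "reach f B \<sigma> \<Longrightarrow> b \<in> B \<Longrightarrow> (\<forall>T t. m = Confirm T t \<longrightarrow> (T, t) \<in> signed \<sigma>) \<Longrightarrow>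
     reach f B (\<sigma>\<lparr> chan := send (chan \<sigma>) (Srv b) x m \<rparr>)"

end

theory Submission
  imports Defs
begin

(* A correct server s fixes pending[t] upon Confirm(T,t) with n - f witnesses.  A correct
   witness q forwarded Confirm(T,t) only after its clock had reached t, so over the FIFO
   channel from q to s every proposal of q with timestamp below t reached s before that
   Confirm, and q never proposes below t afterwards; hence all of them lie in pending[t].
   A transaction T confirmed at t' < t carries the client timestamp t' = 1 + (f+1)-st
   largest acknowledgement, so at least n - 2f servers acknowledged T with a timestamp below
   t'.  As (n - f) + (n - 2f) > n + f for n = 4f + 1, one of these is a correct witness, and
   its proposal of T puts T into pending[t]. *)

lemma pop_apply [simp]: "pop ch p q a b = (if a = p \<and> b = q then tl (ch p q) else ch a b)"
  by (simp add: pop_def)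

lemma send_apply [simp]: "send ch p q m a b = (if a = p \<and> b = q then ch p q @ [m] else ch a b)"
  by (simp add: send_def)

lemma bcast_apply [simp]: "bcast ch p m a b = (if a = p \<and> is_srv b then ch a b @ [m] else ch a b)"
  by (simp add: bcast_def)

lemma set_pop_subset: "set (pop ch p q a b) \<subseteq> set (ch a b)"
  by (cases "ch p q") auto

lemma snoc_eq_append_Cons:
  assumes "zs @ [y] = xs @ a # ys"
  shows "ys = [] \<and> y = a \<and> xs = zs \<or> (\<exists>ys'. zs = xs @ a # ys')"
  using assms by (cases ys rule: rev_cases) auto

lemma cli_handle_simps [simp]:
  "chan (cli_handle c s m \<sigma>) = chan \<sigma>"
  "signed (cli_handle c s m \<sigma>) = signed \<sigma>"
  "proposed (cli_handle c s m \<sigma>) = proposed \<sigma>"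
  "clock (cli_handle c s m \<sigma>) = clock \<sigma>"
  "confirmed (cli_handle c s m \<sigma>) = confirmed \<sigma>"
  "pending (cli_handle c s m \<sigma>) = pending \<sigma>"
  "cwit (cli_handle c s m \<sigma>) = cwit \<sigma>"
  "phase (cli_handle c s m \<sigma>) = phase \<sigma>"
  by (cases m; simp)+

lemma handle_simps [simp]:
  "signed (handle f s p m \<sigma>) = signed \<sigma>"
  "phase (handle f s p m \<sigma>) = phase \<sigma>"
  "acks (handle f s p m \<sigma>) = acks \<sigma>"
  by (cases p; cases m; simp add: Let_def)+

lemma proposed_handle_iff:
  "(T, k) \<in> proposed (handle f s p m \<sigma>) a b \<longleftrightarrow> (T, k) \<in> proposed \<sigma> a b \<or>
     a = s \<and> (b = s \<and> (\<exists>c. p = Cli c) \<and> m = Propose T \<and> k = clock \<sigma> s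
              \<or> p = Srv b \<and> m = Proposed T k)"
  by (cases p; cases m; auto simp: Let_def)

definition reply :: "('s, 't) party \<Rightarrow> 't msg \<Rightarrow> int \<Rightarrow> 't msg \<Rightarrow> bool" where
  "reply p m k y \<longleftrightarrow> (\<exists>c T. p = Cli c \<and> m = Propose T \<and> (y = Proposed T k \<or> y = ProposeAck T k))
     \<or> (\<exists>T t. m = Confirm T t \<and> y = m)"

lemma chan_handle_cases:
  "chan (handle f s p m \<sigma>) a b = chan \<sigma> a b \<or>
   a = Srv s \<and> (\<exists>y. chan (handle f s p m \<sigma>) a b = chan \<sigma> a b @ [y] \<and> reply p m (clock \<sigma> s) y)"
  by (cases p; cases m; auto simp: Let_def reply_def is_srv_def)

lemma cwit_handleD:
  "q \<in> cwit (handle f s p m \<sigma>) s' c \<Longrightarrow> q \<in> cwit \<sigma> s' c \<or> s' = s \<and> p = Srv q \<and> (\<exists>t. m = Confirm c t)"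
  by (cases p; cases m; auto simp: Let_def split: if_splits)

lemma confirmed_handleD:
  "T \<in> confirmed (handle f s p m \<sigma>) s' t \<Longrightarrow> T \<in> confirmed \<sigma> s' t \<or> s' = s \<and> m = Confirm T t"
  by (cases p; cases m; auto simp: Let_def split: if_splits)

definition witnessed_proposals :: "('s, 't) gstate \<Rightarrow> 's \<Rightarrow> 't \<Rightarrow> int \<Rightarrow> 't set" where
  "witnessed_proposals \<sigma> s c t = {T. \<exists>q\<in>cwit \<sigma> s c. \<exists>k\<le>t. (T, k) \<in> proposed \<sigma> s q}"

lemma pending_handle_cases:
  fixes \<sigma> :: "('s::finite, 't) gstate"
  shows "pending (handle f s p m \<sigma>) s' t = pending \<sigma> s' t \<or>
   s' = s \<and> (\<exists>T. m = Confirm T t \<and> card (cwit (handle f s p m \<sigma>) s T) = CARD('s) - f \<and>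
      pending (handle f s p m \<sigma>) s t = witnessed_proposals (handle f s p m \<sigma>) s T t)"
  by (cases p; cases m; auto simp: Let_def witnessed_proposals_def)

abbreviation receive ::
    "nat \<Rightarrow> 's::finite \<Rightarrow> ('s, 't) party \<Rightarrow> 't msg \<Rightarrow> ('s, 't) gstate \<Rightarrow> ('s, 't) gstate" where
  "receive f s p m \<sigma> \<equiv> handle f s p m (\<sigma>\<lparr>chan := pop (chan \<sigma>) p (Srv s)\<rparr>)"

lemma clock_receive_mono: "clock \<sigma> a \<le> clock (receive f s p m \<sigma>) a"
  by (cases p; cases m; simp add: Let_def)

lemma in_chan_receiveD:
  "y \<in> set (chan (receive f s p m \<sigma>) a b) \<Longrightarrow>
   y \<in> set (chan \<sigma> a b) \<or> a = Srv s \<and> reply p m (clock \<sigma> s) y"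
  using chan_handle_cases[of f s p m "\<sigma>\<lparr>chan := pop (chan \<sigma>) p (Srv s)\<rparr>" a b]
    set_pop_subset[of "chan \<sigma>" p "Srv s" a b] by auto

lemma in_chan_receiveI:
  "chan \<sigma> p (Srv s) = m # ms \<Longrightarrow> y \<in> set (chan \<sigma> a b) \<Longrightarrow>
   y \<in> set (chan (receive f s p m \<sigma>) a b) \<or> a = p \<and> b = Srv s \<and> y = m"
  using chan_handle_cases[of f s p m "\<sigma>\<lparr>chan := pop (chan \<sigma>) p (Srv s)\<rparr>" a b]
  by (auto split: if_splits)

lemma confirm_sent_signed:
  assumes "reach f B \<sigma>" and "Confirm c x \<in> set (chan \<sigma> a b)"
  shows "(c, x) \<in> signed \<sigma>"
  using assms
proof (induction arbitrary: a b rule: reach.induct)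
  case (srv_recv \<sigma> s p m ms)
  have "Confirm c x \<in> set (chan \<sigma> a b) \<or> Confirm c x \<in> set (chan \<sigma> p (Srv s))"
    using in_chan_receiveD[OF srv_recv.prems] srv_recv.hyps(3) by (auto simp: reply_def)
  then show ?case
    using srv_recv.IH by auto
next
  case (cli_recv \<sigma> s c' m ms)
  then show ?case by (auto split: if_splits) (metis list.set_intros(2))
qed (auto simp: init_state_def split: if_splits)

lemma signed_confirm_done:
  fixes \<sigma> :: "('s::finite, 't) gstate"
  assumes "reach f B \<sigma>" and "(c, x) \<in> signed \<sigma>"
  shows "phase \<sigma> c = Done \<and> x = client_ts f (acks \<sigma> c) \<and> CARD('s) - f \<le> card {q. acks \<sigma> c q \<noteq> None}"
  using assms
proof (induction rule: reach.induct)
  case (cli_recv \<sigma> s c' m ms)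
  then show ?case by (cases m) (auto split: if_splits)
qed (auto simp: init_state_def)

lemma confirmed_signed:
  assumes "reach f B \<sigma>" and "s \<notin> B" and "T \<in> confirmed \<sigma> s t"
  shows "(T, t) \<in> signed \<sigma>"
  using assms
proof (induction arbitrary: s rule: reach.induct)
  case (srv_recv \<sigma> s0 p m ms)
  have "T \<in> confirmed \<sigma> s t \<or> Confirm T t \<in> set (chan \<sigma> p (Srv s0))"
    using confirmed_handleD[OF srv_recv.prems(2)] srv_recv.hyps(3) by auto
  then show ?case
    using srv_recv.IH srv_recv.prems(1) confirm_sent_signed[OF srv_recv.hyps(1)] by auto
qed (auto simp: init_state_def)

lemma proposal_sent_own:
  assumes "reach f B \<sigma>" and "q \<notin> B" and "y \<in> set (chan \<sigma> (Srv q) b)"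
    and "y = Proposed T k \<or> y = ProposeAck T k"
  shows "(T, k) \<in> proposed \<sigma> q q"
  using assms
proof (induction arbitrary: b rule: reach.induct)
  case (cli_recv \<sigma> s c m ms)
  then show ?case by (auto split: if_splits) (metis list.set_intros(2))+
next
  case (srv_recv \<sigma> s p m ms)
  consider "y \<in> set (chan \<sigma> (Srv q) b)" | "q = s" "\<exists>c. p = Cli c" "m = Propose T" "k = clock \<sigma> s"
    using in_chan_receiveD[OF srv_recv.prems(2)] srv_recv.prems(3) by (auto simp: reply_def)
  then show ?case
  proof cases
    case 1
    then have "(T, k) \<in> proposed \<sigma> q q"
      using srv_recv.IH srv_recv.prems(1,3) by blast
    then show ?thesis by (simp add: proposed_handle_iff)
  qed auto
qed (auto simp: init_state_def split: if_splits)

lemma confirm_sent_le_clock: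
  assumes "reach f B \<sigma>" and "q \<notin> B" and "Confirm c x \<in> set (chan \<sigma> (Srv q) b)"
  shows "x \<le> clock \<sigma> q"
  using assms
proof (induction arbitrary: b rule: reach.induct)
  case (cli_recv \<sigma> s c' m ms)
  then show ?case by (auto split: if_splits) (metis list.set_intros(2))
next
  case (srv_recv \<sigma> s p m ms)
  consider "Confirm c x \<in> set (chan \<sigma> (Srv q) b)" | "q = s" "m = Confirm c x"
    using in_chan_receiveD[OF srv_recv.prems(2)] by (auto simp: reply_def)
  then show ?case
  proof cases
    case 1
    then have "x \<le> clock \<sigma> q"
      using srv_recv.IH srv_recv.prems(1) by blast
    then show ?thesis
      by (rule order.trans[OF _ clock_receive_mono])
  qed (simp add: Let_def)
qed (auto simp: init_state_def split: if_splits)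

lemma ack_own_proposal:
  assumes "reach f B \<sigma>" and "q \<notin> B" and "acks \<sigma> c q = Some k"
  shows "(c, k) \<in> proposed \<sigma> q q"
  using assms
proof (induction rule: reach.induct)
  case (cli_recv \<sigma> s c' m ms)
  have "ProposeAck T k \<in> set (chan \<sigma> (Srv s) (Cli c')) \<Longrightarrow> s \<notin> B \<Longrightarrow> (T, k) \<in> proposed \<sigma> s s" for T k
    using proposal_sent_own[OF cli_recv.hyps(1)] by blast
  with cli_recv show ?case by (cases m) (auto split: if_splits)
next
  case (srv_recv \<sigma> s p m ms)
  then show ?case by (auto simp: proposed_handle_iff)
qed (auto simp: init_state_def)

definition proposals_below :: "('s, 't) gstate \<Rightarrow> 's \<Rightarrow> int \<Rightarrow> ('t \<times> int) set" where
  "proposals_below \<sigma> q x = {(c, k). (c, k) \<in> proposed \<sigma> q q \<and> k < x}"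

definition proposals_in :: "'t msg list \<Rightarrow> ('t \<times> int) set" where
  "proposals_in ms = {(c, k). Proposed c k \<in> set ms}"

lemma own_proposal_receive:
  assumes "reach f B \<sigma>" and "q \<notin> B" and "chan \<sigma> p (Srv s) = m # ms"
    and "(c, k) \<in> proposed (receive f s p m \<sigma>) q q"
  shows "(c, k) \<in> proposed \<sigma> q q \<or> q = s \<and> (\<exists>c'. p = Cli c') \<and> m = Propose c \<and> k = clock \<sigma> q"
proof -
  have "Proposed c k \<in> set (chan \<sigma> (Srv q) (Srv q)) \<Longrightarrow> (c, k) \<in> proposed \<sigma> q q"
    using proposal_sent_own[OF assms(1,2)] by blast
  then show ?thesis
    using assms(3,4) by (auto simp: proposed_handle_iff)
qed

lemma proposals_below_receive:
  assumes "reach f B \<sigma>" and "q \<notin> B" and "chan \<sigma> p (Srv s) = m # ms" and "x \<le> clock \<sigma> q"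
  shows "proposals_below (receive f s p m \<sigma>) q x = proposals_below \<sigma> q x"
  using own_proposal_receive[OF assms(1-3)] assms(4)
  by (fastforce simp: proposals_below_def proposed_handle_iff)

lemma own_proposals_received_or_in_transit:
  assumes "reach f B \<sigma>" and "q \<notin> B" and "s \<notin> B"
  shows "proposed \<sigma> q q \<subseteq> proposed \<sigma> s q \<union> proposals_in (chan \<sigma> (Srv q) (Srv s))"
  using assms
proof (induction arbitrary: q s rule: reach.induct)
  case (srv_recv \<sigma> s0 p m ms)
  show ?case
  proof (rule subrelI)
    fix c k assume own: "(c, k) \<in> proposed (receive f s0 p m \<sigma>) q q"
    show "(c, k) \<in> proposed (receive f s0 p m \<sigma>) s q \<union>
                    proposals_in (chan (receive f s0 p m \<sigma>) (Srv q) (Srv s))"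
    proof (cases "(c, k) \<in> proposed \<sigma> q q")
      case True
      then have "(c, k) \<in> proposed \<sigma> s q \<or> Proposed c k \<in> set (chan \<sigma> (Srv q) (Srv s))"
        using srv_recv.IH srv_recv.prems by (auto simp: proposals_in_def)
      then show ?thesis
        using in_chan_receiveI[OF srv_recv.hyps(3), where f = f]
        by (auto simp: proposed_handle_iff proposals_in_def)
    next
      case False
      then have "q = s0" "\<exists>c'. p = Cli c'" "m = Propose c" "k = clock \<sigma> q"
        using own_proposal_receive[OF srv_recv.hyps(1) srv_recv.prems(1) srv_recv.hyps(3) own]
        by auto
      then show ?thesis by (auto simp: proposals_in_def is_srv_def)
    qed
  qed
qed (auto simp: init_state_def proposals_in_def)

lemma proposals_before_confirm:
  assumes "reach f B \<sigma>" and "q \<notin> B" and "s \<notin> B"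
    and "chan \<sigma> (Srv q) (Srv s) = xs @ Confirm c x # ys"
  shows "proposals_below \<sigma> q x \<subseteq> proposed \<sigma> s q \<union> proposals_in xs"
  using assms
proof (induction arbitrary: q s xs c x ys rule: reach.induct)
  case (srv_recv \<sigma> s0 p m ms)
  let ?\<sigma>' = "receive f s0 p m \<sigma>"
  let ?rest = "pop (chan \<sigma>) p (Srv s0) (Srv q) (Srv s)"
  let ?dropped = "if p = Srv q \<and> s0 = s then [m] else []"
  have split_chan: "chan \<sigma> (Srv q) (Srv s) = ?dropped @ ?rest"
    using srv_recv.hyps(3) by auto
  have "(\<exists>ys'. xs @ Confirm c x # ys' = ?rest) \<or> q = s0 \<and> m = Confirm c x \<and> xs = ?rest"
    using chan_handle_cases[of f s0 p m "\<sigma>\<lparr>chan := pop (chan \<sigma>) p (Srv s0)\<rparr>" "Srv q" "Srv s"]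
      srv_recv.prems(3) snoc_eq_append_Cons[of ?rest _ xs "Confirm c x" ys]
    by (auto simp: reply_def)
  then consider (earlier) ys' where "xs @ Confirm c x # ys' = ?rest"
    | (appended) "q = s0" "m = Confirm c x" "xs = ?rest"
    by blast
  then show ?case
  proof cases
    case earlier
    have "Confirm c x \<in> set (chan \<sigma> (Srv q) (Srv s))"
      unfolding split_chan earlier[symmetric] by simp
    then have "x \<le> clock \<sigma> q"
      using confirm_sent_le_clock[OF srv_recv.hyps(1) srv_recv.prems(1)] by blast
    then have "proposals_below ?\<sigma>' q x = proposals_below \<sigma> q x"
      using proposals_below_receive[OF srv_recv.hyps(1) srv_recv.prems(1) srv_recv.hyps(3)] by blast
    also have "\<dots> \<subseteq> proposed \<sigma> s q \<union> proposals_in (?dropped @ xs)"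
      using srv_recv.IH[OF srv_recv.prems(1,2)] unfolding split_chan earlier[symmetric] by simp
    also have "\<dots> \<subseteq> proposed ?\<sigma>' s q \<union> proposals_in xs"
      by (auto simp: proposals_in_def proposed_handle_iff)
    finally show ?thesis .
  next
    case appended
    then have unchanged: "proposed ?\<sigma>' = proposed \<sigma>"
      by (simp add: Let_def)
    then have "proposals_below ?\<sigma>' q x \<subseteq> proposed \<sigma> q q"
      by (auto simp: proposals_below_def)
    also have "\<dots> \<subseteq> proposed \<sigma> s q \<union> proposals_in (chan \<sigma> (Srv q) (Srv s))"
      using own_proposals_received_or_in_transit[OF srv_recv.hyps(1) srv_recv.prems(1,2)] .
    also have "\<dots> = proposed ?\<sigma>' s q \<union> proposals_in xs"
      unfolding split_chan appended(3)[symmetric] unchanged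
      using appended(2) by (auto simp: proposals_in_def)
    finally show ?thesis .
  qed
qed (auto simp: init_state_def proposals_below_def split: if_splits)

lemma witness_caught_up:
  assumes "reach f B \<sigma>" and "q \<notin> B" and "s \<notin> B" and "q \<in> cwit \<sigma> s c"
  shows "\<exists>x. (c, x) \<in> signed \<sigma> \<and> x \<le> clock \<sigma> q \<and> proposals_below \<sigma> q x \<subseteq> proposed \<sigma> s q"
  using assms
proof (induction arbitrary: q s c rule: reach.induct)
  case (srv_recv \<sigma> s0 p m ms)
  let ?\<sigma>' = "receive f s0 p m \<sigma>"
  have preserved: "x \<le> clock ?\<sigma>' q \<and> proposals_below ?\<sigma>' q x \<subseteq> proposed ?\<sigma>' s q"
    if "x \<le> clock \<sigma> q" and "proposals_below \<sigma> q x \<subseteq> proposed \<sigma> s q" for x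
    using order.trans[OF that(1) clock_receive_mono] that(2)
      proposals_below_receive[OF srv_recv.hyps(1) srv_recv.prems(1) srv_recv.hyps(3) that(1)]
    by (auto simp: proposed_handle_iff)
  consider "q \<in> cwit \<sigma> s c" | t where "s = s0" "p = Srv q" "m = Confirm c t"
    using cwit_handleD[OF srv_recv.prems(3)] by auto
  then show ?case
  proof cases
    case 1
    then obtain x where "(c, x) \<in> signed \<sigma>" "x \<le> clock \<sigma> q" "proposals_below \<sigma> q x \<subseteq> proposed \<sigma> s q"
      using srv_recv.IH srv_recv.prems(1,2) by blast
    then show ?thesis
      using preserved by auto
  next
    case (2 t)
    then have head: "chan \<sigma> (Srv q) (Srv s) = [] @ Confirm c t # ms"
      using srv_recv.hyps(3) by simp
    then have sent: "Confirm c t \<in> set (chan \<sigma> (Srv q) (Srv s))"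
      by simp
    have "(c, t) \<in> signed \<sigma>" and "t \<le> clock \<sigma> q" and "proposals_below \<sigma> q t \<subseteq> proposed \<sigma> s q"
      using confirm_sent_signed[OF srv_recv.hyps(1) sent]
        confirm_sent_le_clock[OF srv_recv.hyps(1) srv_recv.prems(1) sent]
        proposals_before_confirm[OF srv_recv.hyps(1) srv_recv.prems(1,2) head]
      by (simp_all add: proposals_in_def)
    then show ?thesis
      using preserved by auto
  qed
next
  case (cli_confirm \<sigma> c')
  have "q \<in> cwit \<sigma> s c"
    using cli_confirm.prems(3) by simp
  then obtain x where "(c, x) \<in> signed \<sigma>" "x \<le> clock \<sigma> q" "proposals_below \<sigma> q x \<subseteq> proposed \<sigma> s q"
    using cli_confirm.IH[OF cli_confirm.prems(1,2)] by blast
  then show ?case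
    by (intro exI[of _ x]) (simp add: proposals_below_def)
qed (auto simp: init_state_def proposals_below_def)

lemma witness_caught_up_signed:
  assumes "reach f B \<sigma>" and "q \<notin> B" and "s \<notin> B" and "q \<in> cwit \<sigma> s c"
    and "(c, t) \<in> signed \<sigma>"
  shows "t \<le> clock \<sigma> q \<and> fst ` proposals_below \<sigma> q t \<subseteq> witnessed_proposals \<sigma> s c t"
proof -
  obtain x where x: "(c, x) \<in> signed \<sigma>" "x \<le> clock \<sigma> q" "proposals_below \<sigma> q x \<subseteq> proposed \<sigma> s q"
    using witness_caught_up[OF assms(1-4)] by blast
  have "x = t"
    using signed_confirm_done[OF assms(1) x(1)] signed_confirm_done[OF assms(1,5)] by simp
  have "fst ` proposals_below \<sigma> q t \<subseteq> witnessed_proposals \<sigma> s c t"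
  proof
    fix T assume "T \<in> fst ` proposals_below \<sigma> q t"
    then obtain k where "(T, k) \<in> proposed \<sigma> s q" and "k < t"
      using x(3) \<open>x = t\<close> by (force simp: proposals_below_def)
    then show "T \<in> witnessed_proposals \<sigma> s c t"
      using assms(4) less_imp_le unfolding witnessed_proposals_def by blast
  qed
  with x \<open>x = t\<close> show ?thesis
    by simp
qed

lemma pending_quorum:
  fixes \<sigma> :: "('s::finite, 't) gstate"
  assumes "reach f B \<sigma>" and "s \<notin> B" and "pending \<sigma> s t \<noteq> {}"
  shows "\<exists>W. card W = CARD('s) - f \<and>
    (\<forall>q \<in> W - B. t \<le> clock \<sigma> q \<and> fst ` proposals_below \<sigma> q t \<subseteq> pending \<sigma> s t)"
  using assms
proof (induction arbitrary: s t rule: reach.induct)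
  case (srv_recv \<sigma> s0 p m ms)
  let ?\<sigma>' = "receive f s0 p m \<sigma>"
  consider (unchanged) "pending ?\<sigma>' s t = pending \<sigma> s t"
    | (set) T where "s = s0" "m = Confirm T t" "card (cwit ?\<sigma>' s T) = CARD('s) - f"
        "pending ?\<sigma>' s t = witnessed_proposals ?\<sigma>' s T t"
    using pending_handle_cases[of f s0 p m "\<sigma>\<lparr>chan := pop (chan \<sigma>) p (Srv s0)\<rparr>" s t] by auto
  then show ?case
  proof cases
    case unchanged
    then have "pending \<sigma> s t \<noteq> {}"
      using srv_recv.prems(2) by simp
    then obtain W where card_W: "card W = CARD('s) - f"
      and W: "\<forall>q \<in> W - B. t \<le> clock \<sigma> q \<and> fst ` proposals_below \<sigma> q t \<subseteq> pending \<sigma> s t"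
      using srv_recv.IH[OF srv_recv.prems(1)] by blast
    have "t \<le> clock ?\<sigma>' q \<and> fst ` proposals_below ?\<sigma>' q t \<subseteq> pending ?\<sigma>' s t" if "q \<in> W - B" for q
    proof -
      have "t \<le> clock \<sigma> q" and "fst ` proposals_below \<sigma> q t \<subseteq> pending \<sigma> s t"
        using W that by auto
      then show ?thesis
        using order.trans[OF \<open>t \<le> clock \<sigma> q\<close> clock_receive_mono] unchanged that
          proposals_below_receive[OF srv_recv.hyps(1) _ srv_recv.hyps(3) \<open>t \<le> clock \<sigma> q\<close>]
        by auto
    qed
    then show ?thesis
      using card_W by blast
  next
    case (set T)
    have "Confirm T t \<in> set (chan \<sigma> p (Srv s0))"
      using srv_recv.hyps(3) set(2) by simp
    then have signed: "(T, t) \<in> signed ?\<sigma>'"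
      using confirm_sent_signed[OF srv_recv.hyps(1)] by simp
    have "t \<le> clock ?\<sigma>' q \<and> fst ` proposals_below ?\<sigma>' q t \<subseteq> pending ?\<sigma>' s t"
      if "q \<in> cwit ?\<sigma>' s T - B" for q
      using witness_caught_up_signed[OF reach.srv_recv[OF srv_recv.hyps] _ srv_recv.prems(1) _
          signed] that set(4)
      by auto
    then show ?thesis
      using set(3) by blast
  qed
qed (auto simp: init_state_def proposals_below_def)

lemma card_above_kth_largest:
  fixes v :: "'s::finite \<Rightarrow> int"
  shows "card {q. kth_largest f v < v q} \<le> f"
proof -
  define M where "M = image_mset v (mset_set (UNIV :: 's set))"
  define L where "L = rev (sorted_list_of_multiset M)"
  have K: "kth_largest f v = L ! f"
    by (simp add: kth_largest_def L_def M_def)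
  have "card {q. kth_largest f v < v q} = size (filter_mset (\<lambda>y. L ! f < y) M)"
    by (simp add: K M_def filter_mset_image_mset filter_mset_mset_set)
  also have "\<dots> = size (mset (filter (\<lambda>y. L ! f < y) L))"
    by (simp add: L_def)
  also have "\<dots> = card {i. i < length L \<and> L ! f < L ! i}"
    by (simp only: size_mset length_filter_conv_card)
  also have "\<dots> \<le> card {..<f}"
  proof (rule card_mono)
    show "{i. i < length L \<and> L ! f < L ! i} \<subseteq> {..<f}"
    proof (rule subsetI, rule ccontr)
      fix i assume i: "i \<in> {i. i < length L \<and> L ! f < L ! i}" and "i \<notin> {..<f}"
      then have "f \<le> i" and "i < length L" by auto
      then have "L ! i \<le> L ! f"
        unfolding L_def by (simp add: rev_nth sorted_nth_mono)
      with i show False by simp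
    qed
  qed simp
  finally show ?thesis by simp
qed

lemma card_acks_below_client_ts:
  fixes a :: "'s::finite \<Rightarrow> int option"
  shows "card {q. a q \<noteq> None} \<le> card {q. \<exists>k. a q = Some k \<and> k < client_ts f a} + f"
proof -
  define v where "v = (\<lambda>q. case a q of None \<Rightarrow> 0 | Some k \<Rightarrow> k)"
  have "{q. a q \<noteq> None} \<subseteq> {q. \<exists>k. a q = Some k \<and> k < client_ts f a} \<union> {q. kth_largest f v < v q}"
    by (auto simp: client_ts_def v_def)
  then have "card {q. a q \<noteq> None} \<le>
      card {q. \<exists>k. a q = Some k \<and> k < client_ts f a} + card {q. kth_largest f v < v q}"
    by (meson card_Un_le card_mono finite order_trans)
  then show ?thesis
    using card_above_kth_largest[of f v] by linarith
qed

lemma ex_in_Int_notin: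
  fixes W A X :: "'a::finite set"
  assumes "CARD('a) + card X < card W + card A"
  shows "\<exists>q \<in> W \<inter> A. q \<notin> X"
proof (rule ccontr)
  assume "\<not> ?thesis"
  then have "card (W \<inter> A) \<le> card X"
    by (intro card_mono) auto
  moreover have "card (W \<union> A) \<le> CARD('a)"
    using card_mono[of UNIV "W \<union> A"] by simp
  moreover have "card W + card A = card (W \<union> A) + card (W \<inter> A)"
    using card_Un_Int[of W A] by simp
  ultimately show False
    using assms by linarith
qed

theorem lemma4:
  fixes f :: nat and B :: "'s::finite set" and \<sigma> :: "('s, 't) gstate"
    and s s' :: 's and t :: int
  assumes "CARD('s) = 4 * f + 1"
    and "card B \<le> f"
    and "reach f B \<sigma>"
    and "s \<notin> B" and "s' \<notin> B"
    and "pending \<sigma> s t \<noteq> {}"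
  shows "(\<Union>t'\<in>{t'. t' < t}. confirmed \<sigma> s' t') \<subseteq> pending \<sigma> s t"
proof
  fix T assume "T \<in> (\<Union>t'\<in>{t'. t' < t}. confirmed \<sigma> s' t')"
  then obtain t' where "t' < t" and "T \<in> confirmed \<sigma> s' t'"
    by blast
  then have signed: "(T, t') \<in> signed \<sigma>"
    using confirmed_signed[OF assms(3,5)] by blast
  define early_acks where "early_acks = {q. \<exists>k. acks \<sigma> T q = Some k \<and> k < t'}"
  have ts: "t' = client_ts f (acks \<sigma> T)" and acked: "CARD('s) - f \<le> card {q. acks \<sigma> T q \<noteq> None}"
    using signed_confirm_done[OF assms(3) signed] by auto
  have "CARD('s) - f \<le> card early_acks + f"
    using acked card_acks_below_client_ts[of "acks \<sigma> T" f] unfolding early_acks_def ts by linarith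
  obtain W where "card W = CARD('s) - f"
    and W: "\<forall>q \<in> W - B. t \<le> clock \<sigma> q \<and> fst ` proposals_below \<sigma> q t \<subseteq> pending \<sigma> s t"
    using pending_quorum[OF assms(3,4,6)] by blast
  have "CARD('s) + card B < card W + card early_acks"
    using assms(1,2) \<open>card W = CARD('s) - f\<close> \<open>CARD('s) - f \<le> card early_acks + f\<close> by linarith
  then obtain q where "q \<in> W" "q \<in> early_acks" "q \<notin> B"
    by (auto dest: ex_in_Int_notin)
  then obtain k where "acks \<sigma> T q = Some k" and "k < t'"
    by (auto simp: early_acks_def)
  then have "(T, k) \<in> proposals_below \<sigma> q t"
    using ack_own_proposal[OF assms(3) \<open>q \<notin> B\<close>] \<open>t' < t\<close> by (simp add: proposals_below_def)
  moreover have "fst ` proposals_below \<sigma> q t \<subseteq> pending \<sigma> s t"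
    using W \<open>q \<in> W\<close> \<open>q \<notin> B\<close> by blast
  ultimately show "T \<in> pending \<sigma> s t"
    by force
qed

end
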